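(* Let $D$ be a digraph and $X, Y \subseteq V(D)$ such that no vertex of $X$ has an ingoing edge and no vertex of $Y$ has an outgoing edge. Suppose that $X$ is joinable to $Y$ and that $X'$ is joinable to $Y'$ for some $X' \subseteq X$ and $Y' \subseteq Y$ with $|X \setminus X'| < \infty$. Then there is some $Y'' \subseteq Y$ such that $X$ is joinable to $Y''$ and $|Y'' \setminus Y'| \le |X \setminus X'|$.
   Context: Digraphs have no loops or parallel edges. An $(A,B)$-path is a directed path whose initial vertex is in $A$, whose terminal vertex is in $B$, and which is internally disjoint from $A \cup B$; an $(A,B)$-path-system is a set of pairwise vertex-disjoint $(A,B)$-paths. $V^-(\mathcal{P})$ is the set of initial vertices of the paths in $\mathcal{P}$. $A$ is joinable to $B$ (in $D$) if there is an $(A,B)$-path-system $\mathcal{P}$ in $D$ with $V^-(\mathcal{P}) = A$. *)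

theory Defs
  imports Main
begin

definition digraph :: "'a set \<Rightarrow> ('a \<times> 'a) set \<Rightarrow> bool" where
  "digraph V E \<longleftrightarrow> E \<subseteq> V \<times> V \<and> (\<forall>v. (v, v) \<notin> E)"

definition dpath :: "'a set \<Rightarrow> ('a \<times> 'a) set \<Rightarrow> 'a list \<Rightarrow> bool" where
  "dpath V E p \<longleftrightarrow> p \<noteq> [] \<and> distinct p \<and> set p \<subseteq> V \<and>
     (\<forall>i. Suc i < length p \<longrightarrow> (p ! i, p ! Suc i) \<in> E)"

definition AB_path :: "'a set \<Rightarrow> ('a \<times> 'a) set \<Rightarrow> 'a set \<Rightarrow> 'a set \<Rightarrow> 'a list \<Rightarrow> bool" where
  "AB_path V E A B p \<longleftrightarrow> dpath V E p \<and> hd p \<in> A \<and> last p \<in> B \<and>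
     set (butlast (tl p)) \<inter> (A \<union> B) = {}"

definition AB_path_system :: "'a set \<Rightarrow> ('a \<times> 'a) set \<Rightarrow> 'a set \<Rightarrow> 'a set \<Rightarrow> 'a list set \<Rightarrow> bool" where
  "AB_path_system V E A B P \<longleftrightarrow> (\<forall>p\<in>P. AB_path V E A B p) \<and>
     (\<forall>p\<in>P. \<forall>q\<in>P. p \<noteq> q \<longrightarrow> set p \<inter> set q = {})"

definition init_vertices :: "'a list set \<Rightarrow> 'a set" where
  "init_vertices P = hd ` P"

definition joinable :: "'a set \<Rightarrow> ('a \<times> 'a) set \<Rightarrow> 'a set \<Rightarrow> 'a set \<Rightarrow> bool" where
  "joinable V E A B \<longleftrightarrow> (\<exists>P. AB_path_system V E A B P \<and> init_vertices P = A)"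

end

theory Submission
  imports Defs
begin

text \<open>Since X consists of sources and Y of sinks, the inner vertices of any path avoid
  X \<union> Y, so it suffices to work with families of disjoint paths. Adding the vertices of X - X'
  one at a time, it is enough to link X' \<union> {x} into Y' plus one vertex of Y. Let Q link X' into
  Y' and let route t be the path starting at t of a linkage of X into Y. Starting with the active
  vertex z = x, follow route z to its first vertex w that is still free on some path r of Q; replace
  r by route z up to w followed by the rest of r, and make the start of r active. Each time a vertex
  is active, the free part of its route shrinks strictly, so every vertex is active only finitely
  often. Hence either some active route meets no free vertex, and adding it costs one new end
  vertex in Y, or the rerouting runs forever and the paths that eventually stay unchanged link
  X' \<union> {x} into Y' itself.\<close>

lemma set_tl_subset: "set (tl xs) \<subseteq> set xs"
  by (cases xs) auto

lemma finite_strict_descents: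
  fixes g :: "nat \<Rightarrow> nat"
  assumes "\<And>n. g (Suc n) \<le> g n" and "\<And>n. n \<in> A \<Longrightarrow> g (Suc n) < g n"
  shows "finite A"
proof (rule inj_on_finite)
  have "g m < g n" if "n \<in> A" "n < m" for n m
    using assms(2)[OF that(1)] lift_Suc_antimono_le[of g, OF assms(1), of "Suc n" m] that(2) by simp
  then show "inj_on g A"
    by (metis inj_onI less_irrefl linorder_neqE_nat)
  show "g ` A \<subseteq> {..g 0}"
    using lift_Suc_antimono_le[of g, OF assms(1)] by auto
qed simp

lemma dpath_iff_successively:
  "dpath V E p \<longleftrightarrow> p \<noteq> [] \<and> distinct p \<and> set p \<subseteq> V \<and> successively (\<lambda>u v. (u, v) \<in> E) p"
  unfolding dpath_def successively_conv_nth by blast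

lemma dpath_splice:
  assumes "dpath V E (ys @ w # zs)" and "dpath V E (xs @ w # us)"
    and "set ys \<inter> set (w # us) = {}"
  shows "dpath V E (ys @ w # us)"
  using assms unfolding dpath_iff_successively
  by (auto simp: successively_append_iff successively_Cons)

lemma dpath_in_edge:
  assumes "dpath V E p" and "v \<in> set (tl p)"
  shows "\<exists>u. (u, v) \<in> E"
proof -
  obtain i where "Suc i < length p" "p ! Suc i = v"
    using assms(2) by (force simp: in_set_conv_nth nth_tl)
  then show ?thesis using assms(1) unfolding dpath_def by blast
qed

lemma dpath_out_edge:
  assumes "dpath V E p" and "v \<in> set (butlast p)"
  shows "\<exists>w. (v, w) \<in> E"
proof -
  obtain i where "Suc i < length p" "p ! i = v"
    using assms(2) by (force simp: in_set_conv_nth nth_butlast)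
  then show ?thesis using assms(1) unfolding dpath_def by blast
qed

(* An (A,B)-path-system whose paths may meet A \<union> B internally. *)
definition linkage :: "'a set \<Rightarrow> ('a \<times> 'a) set \<Rightarrow> 'a set \<Rightarrow> 'a set \<Rightarrow> 'a list set \<Rightarrow> bool" where
  "linkage V E A B R \<longleftrightarrow> (\<forall>r\<in>R. dpath V E r \<and> last r \<in> B) \<and>
     (\<forall>r\<in>R. \<forall>r'\<in>R. r \<noteq> r' \<longrightarrow> set r \<inter> set r' = {}) \<and> hd ` R = A"

lemma linkage_hd_inj: "linkage V E A B R \<Longrightarrow> inj_on hd R"
  unfolding linkage_def dpath_def inj_on_def by (metis disjoint_iff hd_in_set)

lemma linkage_mono: "linkage V E A B R \<Longrightarrow> B \<subseteq> B' \<Longrightarrow> linkage V E A B' R"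
  unfolding linkage_def by blast

lemma joinable_imp_linkage:
  assumes "joinable V E A B"
  shows "\<exists>R. linkage V E A B R"
proof -
  obtain P where "AB_path_system V E A B P" "hd ` P = A"
    using assms unfolding joinable_def init_vertices_def by blast
  then have "linkage V E A B P"
    unfolding AB_path_system_def AB_path_def linkage_def by simp
  then show ?thesis ..
qed

lemma linkage_imp_joinable:
  assumes "linkage V E A B R"
    and "\<forall>x\<in>A. \<forall>u. (u, x) \<notin> E" and "\<forall>y\<in>B. \<forall>w. (y, w) \<notin> E"
  shows "joinable V E A B"
proof -
  have "set (butlast (tl p)) \<inter> (A \<union> B) = {}" if "dpath V E p" for p
  proof -
    have "set (butlast (tl p)) \<subseteq> set (tl p)"
      by (auto dest: in_set_butlastD)
    moreover have "set (butlast (tl p)) \<subseteq> set (butlast p)"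
      using set_tl_subset[of "butlast p"] by (simp add: butlast_tl)
    ultimately show ?thesis
      using dpath_in_edge[OF that] dpath_out_edge[OF that] assms(2,3) by blast
  qed
  then have "AB_path_system V E A B R"
    using assms(1) unfolding AB_path_system_def AB_path_def linkage_def by auto
  moreover have "init_vertices R = A"
    using assms(1) unfolding init_vertices_def linkage_def by simp
  ultimately show ?thesis
    unfolding joinable_def by blast
qed

locale rerouting =
  fixes V :: "'a set" and E :: "('a \<times> 'a) set" and S Y Y' :: "'a set"
    and route :: "'a \<Rightarrow> 'a list"
  assumes route_dpath: "t \<in> S \<Longrightarrow> dpath V E (route t)"
    and route_hd: "t \<in> S \<Longrightarrow> hd (route t) = t"
    and route_last: "t \<in> S \<Longrightarrow> last (route t) \<in> Y"
    and route_disjoint: "t \<in> S \<Longrightarrow> t' \<in> S \<Longrightarrow> t \<noteq> t' \<Longrightarrow> set (route t) \<inter> set (route t') = {}"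
begin

lemma start_in_route: "t \<in> S \<Longrightarrow> t \<in> set (route t)"
  using route_dpath route_hd unfolding dpath_def by (metis hd_in_set)

(* z is the active vertex, the one vertex of S not linked yet; T is the set of free vertices,
   which a later rerouting may cut off from their path. *)
definition reroute_state :: "'a list set \<Rightarrow> 'a \<Rightarrow> 'a set \<Rightarrow> bool" where
  "reroute_state R z T \<longleftrightarrow> z \<in> S \<and> linkage V E (S - {z}) Y' R \<and> T \<subseteq> (\<Union>r\<in>R. set r) \<and>
     (\<forall>r\<in>R. \<exists>pre suf. r = pre @ suf \<and> set pre \<subseteq> set (route (hd r)) \<and> set suf \<subseteq> T)"

definition advances :: "'a list set \<Rightarrow> 'a \<Rightarrow> 'a set \<Rightarrow> 'a list set \<Rightarrow> 'a \<Rightarrow> 'a set \<Rightarrow> bool" where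
  "advances R z T R' z' T' \<longleftrightarrow> T' \<subseteq> T \<and> set (route z) \<inter> T' \<subset> set (route z) \<inter> T \<and>
     {r \<in> R. hd r \<noteq> z'} \<subseteq> R'"

lemma reroute_state_crossings_free:
  assumes "reroute_state R z T" and "r \<in> R"
  shows "set r \<inter> set (route z) \<subseteq> T"
proof -
  obtain pre suf where r: "r = pre @ suf" "set pre \<subseteq> set (route (hd r))" "set suf \<subseteq> T"
    using assms unfolding reroute_state_def by blast
  have "hd r \<in> S - {z}" "z \<in> S"
    using assms unfolding reroute_state_def linkage_def by auto
  then have "set pre \<inter> set (route z) = {}"
    using r(2) route_disjoint by blast
  then show ?thesis using r(1,3) by auto
qed

lemma initial_reroute_state:
  assumes "z \<in> S" and "linkage V E (S - {z}) Y' Q"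
  shows "reroute_state Q z (\<Union>q\<in>Q. set (tl q))"
  unfolding reroute_state_def
proof (intro conjI ballI)
  fix q assume q: "q \<in> Q"
  then have "q \<noteq> []" "hd q \<in> S"
    using assms(2) unfolding linkage_def dpath_def by auto
  then have "q = [hd q] @ tl q" "set [hd q] \<subseteq> set (route (hd q))"
    using start_in_route by auto
  then show "\<exists>pre suf. q = pre @ suf \<and> set pre \<subseteq> set (route (hd q)) \<and> set suf \<subseteq> (\<Union>q\<in>Q. set (tl q))"
    using q by blast
next
  show "(\<Union>q\<in>Q. set (tl q)) \<subseteq> (\<Union>q\<in>Q. set q)"
    by (intro UN_mono order_refl set_tl_subset)
qed (use assms in auto)

lemma final_reroute_state:
  assumes "reroute_state R z T" and "set (route z) \<inter> T = {}"
  shows "linkage V E S (insert (last (route z)) Y') (insert (route z) R)"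
proof -
  have "z \<in> S" "linkage V E (S - {z}) Y' R"
    using assms(1) unfolding reroute_state_def by auto
  moreover have "set r \<inter> set (route z) = {}" if "r \<in> R" for r
    using reroute_state_crossings_free[OF assms(1) that] assms(2) by blast
  ultimately show ?thesis
    using route_dpath route_hd unfolding linkage_def by auto
qed

lemma spliced_path:
  assumes state: "reroute_state R z T" and r: "r \<in> R"
    and route_z: "route z = ys @ w # zs" and ys: "set ys \<inter> T = {}"
    and r_split: "r = xs @ w # us"
  shows "dpath V E (ys @ w # us)" and "hd (ys @ w # us) = z"
    and "r' \<in> R \<Longrightarrow> r' \<noteq> r \<Longrightarrow> set (ys @ w # us) \<inter> set r' = {}"
proof -
  have z: "z \<in> S" and R: "linkage V E (S - {z}) Y' R"
    using state unfolding reroute_state_def by auto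
  have ys_disjoint: "set ys \<inter> set r' = {}" if "r' \<in> R" for r'
    using reroute_state_crossings_free[OF state that] ys unfolding route_z by auto
  show "dpath V E (ys @ w # us)"
    by (rule dpath_splice[of V E ys w zs xs us])
      (use route_dpath[OF z] R r ys_disjoint[OF r] in \<open>auto simp: route_z r_split linkage_def\<close>)
  show "hd (ys @ w # us) = z"
    using route_hd[OF z] unfolding route_z by (cases ys) auto
  assume "r' \<in> R" "r' \<noteq> r"
  then have "set r \<inter> set r' = {}"
    using R r unfolding linkage_def by blast
  then show "set (ys @ w # us) \<inter> set r' = {}"
    using ys_disjoint[OF \<open>r' \<in> R\<close>] unfolding r_split by auto
qed

lemma reroute_state_splice:
  assumes state: "reroute_state R z T" and r: "r \<in> R"
    and route_z: "route z = ys @ w # zs" and ys: "set ys \<inter> T = {}"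
    and r_split: "r = pre @ mid @ w # us" and pre: "set pre \<subseteq> set (route (hd r))"
    and suf: "set (mid @ w # us) \<subseteq> T"
  shows "reroute_state (insert (ys @ w # us) (R - {r})) (hd r) (T - set (pre @ mid @ [w]))"
proof -
  define new where "new = ys @ w # us"
  define T' where "T' = T - set (pre @ mid @ [w])"
  have z: "z \<in> S" and R: "linkage V E (S - {z}) Y' R" and cover: "T \<subseteq> (\<Union>r\<in>R. set r)"
    and decomp: "\<forall>r\<in>R. \<exists>pre suf. r = pre @ suf \<and> set pre \<subseteq> set (route (hd r)) \<and> set suf \<subseteq> T"
    using state unfolding reroute_state_def by auto
  have hd_r: "hd r \<in> S - {z}" and r_dpath: "dpath V E r"
    using R r unfolding linkage_def by auto
  have new: "dpath V E new" "hd new = z" "\<And>r'. r' \<in> R \<Longrightarrow> r' \<noteq> r \<Longrightarrow> set new \<inter> set r' = {}"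
    using spliced_path[OF state r route_z ys, of "pre @ mid" us] r_split unfolding new_def by auto
  have "hd ` (R - {r}) = hd ` R - {hd r}"
    using linkage_hd_inj[OF R] r by (auto simp: inj_on_def)
  moreover have "last new = last r"
    unfolding new_def r_split by simp
  ultimately have "linkage V E (S - {hd r}) Y' (insert new (R - {r}))"
    using R r hd_r z new unfolding linkage_def by auto
  moreover have "T' \<subseteq> (\<Union>r\<in>insert new (R - {r}). set r)"
  proof -
    have "T \<subseteq> set r \<union> (\<Union>r'\<in>R - {r}. set r')"
      using cover r by blast
    then show ?thesis
      unfolding T'_def new_def r_split by auto
  qed
  moreover have "\<exists>pre suf. r' = pre @ suf \<and> set pre \<subseteq> set (route (hd r')) \<and> set suf \<subseteq> T'"
    if "r' \<in> insert new (R - {r})" for r'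
  proof (cases "r' = new")
    case True
    then have "set (ys @ [w]) \<subseteq> set (route (hd r'))"
      using new(2) by (auto simp: route_z)
    moreover have "r' = (ys @ [w]) @ us" "set us \<subseteq> T'"
      using True suf r_dpath unfolding new_def r_split T'_def dpath_def by auto
    ultimately show ?thesis
      by blast
  next
    case False
    then have "r' \<in> R" "set r' \<inter> set r = {}"
      using that R r unfolding linkage_def by auto
    then show ?thesis
      using decomp unfolding T'_def r_split by fastforce
  qed
  ultimately show ?thesis
    using hd_r unfolding reroute_state_def new_def T'_def by blast
qed

(* Follow the route of z to its first free vertex w and continue along the path r through w;
   the start of r becomes active. *)
lemma reroute_step:
  assumes state: "reroute_state R z T" and meets: "set (route z) \<inter> T \<noteq> {}"
  shows "\<exists>R' z' T'. reroute_state R' z' T' \<and> advances R z T R' z' T'"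
proof -
  have "\<exists>v\<in>set (route z). v \<in> T"
    using meets by blast
  then obtain ys w zs where route_z: "route z = ys @ w # zs" and w: "w \<in> T"
    and "\<forall>v\<in>set ys. v \<notin> T"
    by (rule split_list_first_propE)
  then have ys: "set ys \<inter> T = {}"
    by blast
  obtain r where r: "r \<in> R" "w \<in> set r"
    using state w unfolding reroute_state_def by blast
  obtain pre suf where r_split: "r = pre @ suf" and pre: "set pre \<subseteq> set (route (hd r))"
    and suf: "set suf \<subseteq> T"
    using state r(1) unfolding reroute_state_def by blast
  have "hd r \<in> S - {z}" "z \<in> S"
    using state r(1) unfolding reroute_state_def linkage_def by auto
  then have "w \<notin> set pre"
    using pre route_disjoint[of "hd r" z] unfolding route_z by auto
  then obtain mid us where "suf = mid @ w # us"
    using r(2) split_list[of w suf] unfolding r_split by auto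
  then have "reroute_state (insert (ys @ w # us) (R - {r})) (hd r) (T - set (pre @ mid @ [w]))"
    using reroute_state_splice[OF state r(1) route_z ys _ pre] suf r_split by simp
  moreover have "w \<in> set (route z) \<inter> T" "w \<notin> T - set (pre @ mid @ [w])"
    using route_z w by auto
  ultimately show ?thesis
    unfolding advances_def
    by (intro exI[of _ "insert (ys @ w # us) (R - {r})"] exI[of _ "hd r"] exI conjI) blast+
qed

lemma reroute_eventually_inactive:
  assumes "\<And>n. advances (R n) (z n) (T n) (R (Suc n)) (z (Suc n)) (T (Suc n))"
  shows "\<forall>\<^sub>F n in sequentially. z n \<noteq> t"
proof -
  \<comment> \<open>the free part of the route of t shrinks strictly whenever t is active\<close>
  have "finite {n. z n = t}"
  proof (rule finite_strict_descents[where g = "\<lambda>n. card (set (route t) \<inter> T n)"])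
    show "card (set (route t) \<inter> T (Suc n)) \<le> card (set (route t) \<inter> T n)" for n
      using assms[of n] unfolding advances_def by (intro card_mono) auto
    show "card (set (route t) \<inter> T (Suc n)) < card (set (route t) \<inter> T n)" if "n \<in> {n. z n = t}" for n
      using assms[of n] that unfolding advances_def by (intro psubset_card_mono) auto
  qed
  then show ?thesis
    by (simp add: cofinite_eq_sequentially[symmetric] eventually_cofinite)
qed

lemma reroute_eventually_kept:
  assumes "\<And>n. advances (R n) (z n) (T n) (R (Suc n)) (z (Suc n)) (T (Suc n))"
    and "r \<in> R N" and "\<forall>n\<ge>N. z n \<noteq> hd r"
  shows "\<forall>\<^sub>F n in sequentially. r \<in> R n"
proof -
  have "r \<in> R n" if "N \<le> n" for n
    using that
  proof (induction n rule: dec_induct)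
    case base
    show ?case using assms(2) .
  next
    case (step n)
    have "z (Suc n) \<noteq> hd r"
      using assms(3) step.hyps(1) by simp
    then show ?case
      using assms(1)[of n] step.IH unfolding advances_def by auto
  qed
  then show ?thesis
    unfolding eventually_sequentially by blast
qed

lemma reroute_limit:
  assumes states: "\<And>n. reroute_state (R n) (z n) (T n)"
    and steps: "\<And>n. advances (R n) (z n) (T n) (R (Suc n)) (z (Suc n)) (T (Suc n))"
  shows "linkage V E S Y' {r. \<forall>\<^sub>F n in sequentially. r \<in> R n}" (is "linkage _ _ _ _ ?L")
proof -
  have member: "\<exists>n. r \<in> R n" if "r \<in> ?L" for r
    using eventually_happens'[OF sequentially_bot] that by blast
  have "dpath V E r \<and> last r \<in> Y'" if "r \<in> ?L" for r
    using member[OF that] states unfolding reroute_state_def linkage_def by blast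
  moreover have "set r \<inter> set r' = {}" if "r \<in> ?L" "r' \<in> ?L" "r \<noteq> r'" for r r'
  proof -
    have "\<forall>\<^sub>F n in sequentially. r \<in> R n \<and> r' \<in> R n"
      using that by (intro eventually_conj) auto
    then obtain n where "r \<in> R n" "r' \<in> R n"
      using eventually_happens'[OF sequentially_bot] by blast
    then show ?thesis
      using states[of n] \<open>r \<noteq> r'\<close> unfolding reroute_state_def linkage_def by blast
  qed
  moreover have "hd ` ?L \<subseteq> S"
    using member states unfolding reroute_state_def linkage_def by fastforce
  moreover have "t \<in> hd ` ?L" if "t \<in> S" for t
  proof -
    obtain N where N: "\<forall>n\<ge>N. z n \<noteq> t"
      using reroute_eventually_inactive[of R z T t, OF steps]
      unfolding eventually_sequentially by blast
    then have "t \<in> hd ` R N"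
      using states[of N] that unfolding reroute_state_def linkage_def by auto
    then obtain r where "r \<in> R N" "hd r = t"
      by blast
    then have "r \<in> ?L"
      using reroute_eventually_kept[of R z T r N, OF steps] N by simp
    then show ?thesis
      using \<open>hd r = t\<close> by blast
  qed
  ultimately show ?thesis
    unfolding linkage_def by blast
qed

lemma reroute_sequence:
  assumes "reroute_state R\<^sub>0 z\<^sub>0 T\<^sub>0"
    and meets: "\<And>R z T. reroute_state R z T \<Longrightarrow> set (route z) \<inter> T \<noteq> {}"
  obtains R z T where "\<And>n. reroute_state (R n) (z n) (T n)"
    and "\<And>n. advances (R n) (z n) (T n) (R (Suc n)) (z (Suc n)) (T (Suc n))"
proof -
  define P :: "nat \<Rightarrow> 'a list set \<times> 'a \<times> 'a set \<Rightarrow> bool"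
    where "P = (\<lambda>_ (R, z, T). reroute_state R z T)"
  define Q :: "nat \<Rightarrow> 'a list set \<times> 'a \<times> 'a set \<Rightarrow> 'a list set \<times> 'a \<times> 'a set \<Rightarrow> bool"
    where "Q = (\<lambda>_ (R, z, T) (R', z', T'). advances R z T R' z' T')"
  have "\<exists>f. \<forall>n. P n (f n) \<and> Q n (f n) (f (Suc n))"
  proof (rule dependent_nat_choice)
    show "\<exists>s. P 0 s"
      using assms(1) unfolding P_def by auto
    show "\<exists>s'. P (Suc n) s' \<and> Q n s s'" if "P n s" for s n
    proof -
      obtain R z T where s: "s = (R, z, T)"
        by (cases s)
      then have "reroute_state R z T"
        using that unfolding P_def by simp
      then obtain R' z' T' where "reroute_state R' z' T'" "advances R z T R' z' T'"
        using reroute_step[OF _ meets] by blast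
      then show ?thesis
        unfolding P_def Q_def s by (intro exI[of _ "(R', z', T')"]) simp
    qed
  qed
  then obtain f where P: "\<And>n. P n (f n)" and Q: "\<And>n. Q n (f n) (f (Suc n))"
    by blast
  show ?thesis
  proof (rule that)
    show "reroute_state (fst (f n)) (fst (snd (f n))) (snd (snd (f n)))" for n
      using P[of n] unfolding P_def by (simp add: case_prod_beta)
    show "advances (fst (f n)) (fst (snd (f n))) (snd (snd (f n)))
        (fst (f (Suc n))) (fst (snd (f (Suc n)))) (snd (snd (f (Suc n))))" for n
      using Q[of n] unfolding Q_def by (simp add: case_prod_beta)
  qed
qed

lemma reroute_state_imp_linkage:
  assumes "reroute_state R\<^sub>0 z\<^sub>0 T\<^sub>0"
  shows "\<exists>R y. y \<in> Y \<and> linkage V E S (insert y Y') R"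
proof (cases "\<exists>R z T. reroute_state R z T \<and> set (route z) \<inter> T = {}")
  case True
  then obtain R z T where "reroute_state R z T" "set (route z) \<inter> T = {}"
    by blast
  then show ?thesis
    using final_reroute_state route_last unfolding reroute_state_def by blast
next
  case False
  then obtain R z T where "\<And>n. reroute_state (R n) (z n) (T n)"
    and "\<And>n. advances (R n) (z n) (T n) (R (Suc n)) (z (Suc n)) (T (Suc n))"
    using reroute_sequence[OF assms] by blast
  then have "linkage V E S Y' {r. \<forall>\<^sub>F n in sequentially. r \<in> R n}"
    by (rule reroute_limit)
  moreover have "last (route z\<^sub>0) \<in> Y"
    using assms route_last unfolding reroute_state_def by blast
  ultimately show ?thesis
    using linkage_mono[of V E S Y'] by blast
qed

end

lemma joinable_insert:
  assumes sources: "\<forall>x\<in>X. \<forall>u. (u, x) \<notin> E" and sinks: "\<forall>y\<in>Y. \<forall>w. (y, w) \<notin> E"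
    and "joinable V E X Y" and "X' \<subseteq> X" and "Y' \<subseteq> Y" and "joinable V E X' Y'"
    and "x \<in> X" and "x \<notin> X'"
  shows "\<exists>y\<in>Y. joinable V E (insert x X') (insert y Y')"
proof -
  obtain P where P: "linkage V E X Y P"
    using assms(3) joinable_imp_linkage by blast
  obtain Q where Q: "linkage V E X' Y' Q"
    using assms(6) joinable_imp_linkage by blast
  define route where "route = inv_into P hd"
  have route: "route t \<in> P" "hd (route t) = t" if "t \<in> insert x X'" for t
    using P that assms(4,7) unfolding route_def linkage_def
    by (auto intro: inv_into_into f_inv_into_f)
  interpret rerouting V E "insert x X'" Y Y' route
  proof
    fix t assume "t \<in> insert x X'"
    then show "dpath V E (route t)" "hd (route t) = t" "last (route t) \<in> Y"
      using route P unfolding linkage_def by auto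
  next
    fix t t' assume "t \<in> insert x X'" "t' \<in> insert x X'" "t \<noteq> t'"
    then have "route t \<noteq> route t'" "route t \<in> P" "route t' \<in> P"
      using route by metis+
    then show "set (route t) \<inter> set (route t') = {}"
      using P unfolding linkage_def by blast
  qed
  have "reroute_state Q x (\<Union>q\<in>Q. set (tl q))"
    using Q assms(8) by (intro initial_reroute_state) auto
  then obtain R y where "y \<in> Y" and R: "linkage V E (insert x X') (insert y Y') R"
    using reroute_state_imp_linkage by blast
  have "\<forall>v\<in>insert x X'. \<forall>u. (u, v) \<notin> E" "\<forall>v\<in>insert y Y'. \<forall>w. (v, w) \<notin> E"
    using sources sinks assms(4,5,7) \<open>y \<in> Y\<close> by blast+
  then show ?thesis
    using linkage_imp_joinable[OF R] \<open>y \<in> Y\<close> by blast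
qed

lemma joinable_union_finite:
  assumes sources: "\<forall>x\<in>X. \<forall>u. (u, x) \<notin> E" and sinks: "\<forall>y\<in>Y. \<forall>w. (y, w) \<notin> E"
    and "joinable V E X Y" and "X' \<subseteq> X" and "Y' \<subseteq> Y" and "joinable V E X' Y'"
    and "finite F" and "F \<subseteq> X"
  shows "\<exists>G. G \<subseteq> Y \<and> finite G \<and> card G \<le> card F \<and> joinable V E (X' \<union> F) (Y' \<union> G)"
  using \<open>finite F\<close> \<open>F \<subseteq> X\<close>
proof (induction F rule: finite_induct)
  case empty
  then show ?case
    using assms(6) by (intro exI[of _ "{}"]) simp
next
  case (insert x F)
  then obtain G where G: "G \<subseteq> Y" "finite G" "card G \<le> card F" "joinable V E (X' \<union> F) (Y' \<union> G)"
    by blast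
  show ?case
  proof (cases "x \<in> X'")
    case True
    then show ?thesis
      using G insert.hyps by (intro exI[of _ G]) (auto simp: insert_absorb)
  next
    case False
    obtain y where "y \<in> Y" "joinable V E (insert x (X' \<union> F)) (insert y (Y' \<union> G))"
      using joinable_insert[OF sources sinks assms(3) _ _ G(4)] assms(4,5) G(1) insert False
      by blast
    moreover have "card (insert y G) \<le> card (insert x F)"
      using G(2,3) insert.hyps by (simp add: card_insert_if)
    ultimately show ?thesis
      using G(1,2) by (intro exI[of _ "insert y G"]) auto
  qed
qed

theorem lemma4p3:
  fixes V :: "'a set" and E :: "('a \<times> 'a) set" and X Y X' Y' :: "'a set"
  assumes "digraph V E"
    and "X \<subseteq> V" and "Y \<subseteq> V"
    and "\<forall>x\<in>X. \<forall>u. (u, x) \<notin> E"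
    and "\<forall>y\<in>Y. \<forall>w. (y, w) \<notin> E"
    and "joinable V E X Y"
    and "X' \<subseteq> X" and "Y' \<subseteq> Y"
    and "finite (X - X')"
    and "joinable V E X' Y'"
  shows "\<exists>Y''. Y'' \<subseteq> Y \<and> joinable V E X Y'' \<and>
           finite (Y'' - Y') \<and> card (Y'' - Y') \<le> card (X - X')"
proof -
  obtain G where G: "G \<subseteq> Y" "finite G" "card G \<le> card (X - X')"
    and joinable: "joinable V E (X' \<union> (X - X')) (Y' \<union> G)"
    using joinable_union_finite[OF assms(4-8,10,9)] by blast
  have "X' \<union> (X - X') = X"
    using assms(7) by blast
  have new_targets: "(Y' \<union> G) - Y' \<subseteq> G"
    by blast
  show ?thesis
  proof (intro exI conjI)
    show "Y' \<union> G \<subseteq> Y"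
      using assms(8) G(1) by blast
    show "joinable V E X (Y' \<union> G)"
      using joinable \<open>X' \<union> (X - X') = X\<close> by simp
    show "finite ((Y' \<union> G) - Y')"
      using finite_subset[OF new_targets G(2)] .
    show "card ((Y' \<union> G) - Y') \<le> card (X - X')"
      using card_mono[OF G(2) new_targets] G(3) by linarith
  qed
qed

end
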